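(* Let $p\in\mathbb{Z}[x]$ have degree $n\ge2$ and integer coefficients of absolute value less than $2^\tau$, with distinct complex roots $z_1,\dots,z_k$ of multiplicities $m_1,\dots,m_k$. Then $$\prod_{i=1}^k|P_i|\ge 2^{-2n\tau-n\log n},$$ and consequently $\sum_{i=1}^k\log M(P_i^{-1})=\tilde O(n\tau)$.
   Context: Logarithms base 2; $M(x)=\max(1,|x|)$; $P_i:=\prod_{j\ne i}(z_i-z_j)^{m_j}$. $\tilde O$ hides polylogarithmic factors in $n,\tau$. *)

theory Defs
  imports "HOL-Analysis.Analysis" "HOL-Computational_Algebra.Polynomial"
begin

definition cpoly :: "int poly \<Rightarrow> complex poly" where
  "cpoly p = map_poly of_int p"

definition croots :: "int poly \<Rightarrow> complex set" where
  "croots p = {z. poly (cpoly p) z = 0}"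

definition Pfac :: "int poly \<Rightarrow> complex \<Rightarrow> complex" where
  "Pfac p z = (\<Prod>w\<in>croots p - {z}. (z - w) ^ order w (cpoly p))"

definition Mval :: "complex \<Rightarrow> real" where
  "Mval x = max 1 (norm x)"

definition coeff_bounded :: "int poly \<Rightarrow> nat \<Rightarrow> bool" where
  "coeff_bounded p \<tau> \<longleftrightarrow> (\<forall>i. \<bar>coeff p i\<bar> < 2 ^ \<tau>)"

end

theory Submission
  imports Defs
    Berlekamp_Zassenhaus.Factorize_Int_Poly
    Berlekamp_Zassenhaus.Mahler_Measure
    Subresultants.Subresultant
begin

text \<open>
  Write \<open>p = c \<Prod> a ^ i\<close> with pairwise coprime square-free factors \<open>a\<close> (the prime factors
  of positive degree). At a root \<open>z\<close> of \<open>a\<close> one has \<open>lc(p) P(z) = c G(z)\<close> with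
  \<open>G = a' ^ i \<Prod> b ^ j\<close>, the product running over the other factors; the product of the \<open>|G(z)|\<close>
  over the roots of \<open>a\<close> is \<open>|res(G, a)| / lc(a) ^ deg G\<close>, and this resultant is a nonzero
  integer. This yields \<open>\<Prod> |P(z)| \<ge> |lc p| ^ (-2n) \<ge> 2 ^ (-2n\<tau>)\<close>.
  For the second claim, \<open>log M(1/P) = log M(P) - log |P|\<close>. Since \<open>lc(p) P(z)\<close> is the \<open>m\<close>-th
  Taylor coefficient of \<open>p\<close> at a root \<open>z\<close> of multiplicity \<open>m\<close>, \<open>|P(z)| \<le> n ^ m \<parallel>p\<parallel>\<^sub>1 M(z) ^ n\<close>,
  and Landau's inequality bounds \<open>\<Prod> M(z)\<close> by \<open>\<parallel>p\<parallel>\<^sub>1 \<le> (n + 1) 2 ^ \<tau>\<close>.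
\<close>

hide_const (open) Coset.order module.smult Explicit_Roots.croots

section \<open>Resultants in terms of roots\<close>

lemma norm_prod_mset: "norm (\<Prod>x\<in>#A. f x :: 'a :: real_normed_field) = (\<Prod>x\<in>#A. norm (f x))"
  by (induction A) (auto simp: norm_mult)

lemma poly_eq_lead_coeff_prod_proots:
  fixes G :: "complex poly"
  shows "poly G u = lead_coeff G * (\<Prod>v\<in>#proots G. u - v)"
proof -
  have "poly G u = poly (smult (lead_coeff G) (\<Prod>v\<in>#proots G. [:-v, 1:])) u"
    by (subst complex_poly_decompose_multiset) simp
  then show ?thesis by (simp add: poly_prod_mset)
qed

lemma prod_proots_norm_poly_swap:
  fixes G H :: "complex poly"
  shows "norm (lead_coeff H) ^ degree G * (\<Prod>u\<in>#proots H. norm (poly G u)) =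
         norm (lead_coeff G) ^ degree H * (\<Prod>v\<in>#proots G. norm (poly H v))"
proof -
  have "(\<Prod>u\<in>#proots H. norm (poly G u)) =
      norm (lead_coeff G) ^ degree H * (\<Prod>u\<in>#proots H. \<Prod>v\<in>#proots G. norm (u - v))"
    by (simp add: poly_eq_lead_coeff_prod_proots[of G] norm_mult norm_prod_mset
        prod_mset.distrib size_proots_complex)
  moreover have "(\<Prod>v\<in>#proots G. norm (poly H v)) =
      norm (lead_coeff H) ^ degree G * (\<Prod>v\<in>#proots G. \<Prod>u\<in>#proots H. norm (v - u))"
    by (simp add: poly_eq_lead_coeff_prod_proots[of H] norm_mult norm_prod_mset
        prod_mset.distrib size_proots_complex)
  moreover have "(\<Prod>u\<in>#proots H. \<Prod>v\<in>#proots G. norm (u - v)) =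
      (\<Prod>v\<in>#proots G. \<Prod>u\<in>#proots H. norm (v - u))"
    by (subst prod_mset.swap) (simp add: norm_minus_commute)
  ultimately show ?thesis by (simp add: ac_simps)
qed

lemma norm_resultant_mod:
  fixes F G :: "'a :: real_normed_field poly"
  assumes deg_G: "degree G > 0" and deg_GF: "degree G \<le> degree F"
  shows "norm (resultant F G) =
    norm (lead_coeff G) ^ (degree F - degree (F mod G)) * norm (resultant G (F mod G))"
proof -
  define H where "H = F mod G"
  have FGH: "F + (- (F div G)) * G = H"
    unfolding H_def by (metis add_diff_cancel_left' diff_conv_add_uminus div_mult_mod_eq minus_mult_left)
  have deg_HG: "degree H < degree G" if "H \<noteq> 0"
    using that deg_G unfolding H_def by (intro degree_mod_less') auto
  consider "H = 0" | "H \<noteq> 0" "degree H = 0" | "degree H > 0" by auto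
  then show ?thesis
  proof cases
    case 1
    then have "F = (F div G) * G" unfolding H_def by (metis add.right_neutral div_mult_mod_eq)
    from subresultant_product[OF this deg_GF, of 0] deg_G have "resultant F G = 0"
      by (simp add: subresultant_resultant)
    with 1 deg_G show ?thesis by (simp add: H_def)
  next
    case 2
    then obtain h where H: "H = [:h:]" by (metis degree_eq_zeroE)
    from BT_lemma_1_13'[OF FGH deg_GF _ _, of 0] deg_G 2
    have "subresultant 0 F G = smult ((- 1) ^ (degree F * degree G) *
        lead_coeff G ^ degree F * lead_coeff H ^ (degree G - 1)) H" by simp
    then have "resultant F G =
        (- 1) ^ (degree F * degree G) * lead_coeff G ^ degree F * h ^ (degree G - 1) * h"
      by (simp add: subresultant_resultant H)
    then have "norm (resultant F G) = norm (lead_coeff G) ^ degree F * norm h ^ degree G"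
      using deg_G by (simp add: norm_mult norm_power power_Suc2[symmetric])
    then show ?thesis using 2 by (simp add: H_def[symmetric] H norm_power)
  next
    case 3
    then have "H \<noteq> 0" by auto
    with deg_HG have "degree H < degree G" by blast
    with BT_lemma_1_12[OF FGH deg_GF _, of 0] 3
    have "subresultant 0 F G = smult ((- 1) ^ (degree F * degree G) *
        lead_coeff G ^ (degree F - degree H)) (subresultant 0 G H)" by auto
    then have "resultant F G = (- 1) ^ (degree F * degree G) *
        lead_coeff G ^ (degree F - degree H) * resultant G H"
      by (simp add: subresultant_resultant)
    then show ?thesis by (simp add: H_def norm_mult norm_power)
  qed
qed

lemma norm_resultant_eq_prod_proots:
  fixes F G :: "complex poly"
  assumes "G \<noteq> 0"
  shows "norm (resultant F G) = norm (lead_coeff G) ^ degree F * (\<Prod>v\<in>#proots G. norm (poly F v))"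
  using assms
proof (induction "degree G" arbitrary: F G rule: less_induct)
  case less
  consider "degree G = 0" | "0 < degree G" "degree F < degree G"
    | "0 < degree G" "degree G \<le> degree F" by linarith
  then show ?case
  proof cases
    case 1
    then obtain c where G: "G = [:c:]" by (metis degree_eq_zeroE)
    have "proots G = {#}" using 1 less.prems size_proots_complex[of G] by simp
    then show ?thesis by (simp add: G norm_power)
  next
    case 2
    show ?thesis
    proof (cases "F = 0")
      case True
      with 2 show ?thesis by (simp add: size_proots_complex)
    next
      case False
      have "norm (resultant F G) = norm (resultant G F)"
        by (subst resultant_swap) (simp add: norm_mult norm_power)
      also have "\<dots> = norm (lead_coeff F) ^ degree G * (\<Prod>u\<in>#proots F. norm (poly G u))"
        using less.hyps[OF 2(2) False] .
      also have "\<dots> = norm (lead_coeff G) ^ degree F * (\<Prod>v\<in>#proots G. norm (poly F v))"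
        by (rule prod_proots_norm_poly_swap)
      finally show ?thesis .
    qed
  next
    case 3
    define H where "H = F mod G"
    have roots_eq: "(\<Prod>v\<in>#proots G. norm (poly F v)) = (\<Prod>v\<in>#proots G. norm (poly H v))"
      using less.prems by (intro arg_cong[where f = prod_mset] image_mset_cong) (simp add: H_def poly_mod)
    show ?thesis
    proof (cases "H = 0")
      case True
      with 3 show ?thesis
        using roots_eq norm_resultant_mod[OF 3] by (simp add: H_def size_proots_complex)
    next
      case False
      have deg_HG: "degree H < degree G"
        using False less.prems by (simp add: H_def degree_mod_less')
      have "norm (resultant F G) = norm (lead_coeff G) ^ (degree F - degree H) * norm (resultant G H)"
        using norm_resultant_mod[OF 3] by (simp add: H_def)
      also have "norm (resultant G H) =
          norm (lead_coeff H) ^ degree G * (\<Prod>u\<in>#proots H. norm (poly G u))"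
        using less.hyps[OF deg_HG False] .
      also have "\<dots> = norm (lead_coeff G) ^ degree H * (\<Prod>v\<in>#proots G. norm (poly H v))"
        by (rule prod_proots_norm_poly_swap)
      finally show ?thesis
        using roots_eq deg_HG 3 by (simp add: mult.assoc power_add[symmetric])
    qed
  qed
qed

lemma resultant_eq_0_if_common_root:
  fixes F G :: "complex poly"
  assumes "G \<noteq> 0" "poly G z = 0" "poly F z = 0"
  shows "resultant F G = 0"
proof -
  have "(\<Prod>v\<in>#proots G. norm (poly F v)) = 0"
    using assms by (force simp: prod_mset_zero_iff)
  then have "norm (resultant F G) = 0"
    using norm_resultant_eq_prod_proots[OF assms(1), of F] by (metis mult_zero_right)
  then show ?thesis by simp
qed

lemma prod_roots_eq_prod_proots_if_rsquarefree:
  fixes Q :: "'a :: idom poly" and f :: "'a \<Rightarrow> 'b :: comm_monoid_mult"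
  assumes "Q \<noteq> 0" "rsquarefree Q"
  shows "(\<Prod>z\<in>{z. poly Q z = 0}. f z) = (\<Prod>z\<in>#proots Q. f z)"
proof -
  have "(\<Prod>z\<in>#proots Q. f z) = (\<Prod>z\<in>{z. poly Q z = 0}. f z ^ order z Q)"
    using assms(1) by (simp add: image_prod_mset_multiplicity set_count_proots count_proots)
  also have "\<dots> = (\<Prod>z\<in>{z. poly Q z = 0}. f z)"
    using assms by (intro prod.cong) (auto simp: rsquarefree_root_order)
  finally show ?thesis ..
qed

section \<open>Integer polynomials and their complex roots\<close>

lemma cpoly_simps [simp]:
  "degree (cpoly p) = degree p"
  "coeff (cpoly p) k = of_int (coeff p k)"
  "cpoly p = 0 \<longleftrightarrow> p = 0"
  "resultant (cpoly f) (cpoly g) = of_int (resultant f g)"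
  unfolding cpoly_def by (simp_all add: of_int_hom.resultant_hom)

lemma pderiv_cpoly: "pderiv (cpoly p) = cpoly (pderiv p)"
  unfolding cpoly_def by (simp add: of_int_hom.map_poly_pderiv)

lemma finite_croots: "p \<noteq> 0 \<Longrightarrow> finite (croots p)"
  unfolding Defs.croots_def by (simp add: poly_roots_finite)

lemma card_croots_le: "p \<noteq> 0 \<Longrightarrow> card (croots p) \<le> degree p"
  unfolding Defs.croots_def using card_poly_roots_bound[of "cpoly p"] by simp

lemma sum_order_croots: "p \<noteq> 0 \<Longrightarrow> (\<Sum>z\<in>croots p. order z (cpoly p)) = degree p"
  using size_multiset_overloaded_eq[of "proots (cpoly p)"] size_proots_complex[of "cpoly p"]
  by (simp add: set_count_proots count_proots Defs.croots_def)

lemma one_le_abs_of_int: "x \<noteq> 0 \<Longrightarrow> 1 \<le> \<bar>real_of_int x\<bar>"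
  by (metis of_int_1_le_iff of_int_abs zero_less_abs_iff int_one_le_iff_zero_less)

text \<open>The product below is the absolute value of the integer resultant of \<open>g\<close> and \<open>a\<close>, which is
  nonzero as the two polynomials have no common root.\<close>
lemma one_le_prod_proots_norm_poly:
  fixes a g :: "int poly"
  assumes a: "a \<noteq> 0" and no_common_root: "\<And>z. poly (cpoly a) z = 0 \<Longrightarrow> poly (cpoly g) z \<noteq> 0"
  shows "1 \<le> \<bar>real_of_int (lead_coeff a)\<bar> ^ degree g *
    (\<Prod>z\<in>#proots (cpoly a). norm (poly (cpoly g) z))"
proof -
  have eq: "\<bar>real_of_int (resultant g a)\<bar> = \<bar>real_of_int (lead_coeff a)\<bar> ^ degree g *
      (\<Prod>z\<in>#proots (cpoly a). norm (poly (cpoly g) z))"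
    using norm_resultant_eq_prod_proots[of "cpoly a" "cpoly g"] a by (simp add: norm_power)
  moreover have "(\<Prod>z\<in>#proots (cpoly a). norm (poly (cpoly g) z)) \<noteq> 0"
    using no_common_root a by (auto simp: prod_mset_zero_iff)
  ultimately have "resultant g a \<noteq> 0" using a by auto
  with eq show ?thesis using one_le_abs_of_int[of "resultant g a"] by simp
qed

lemma coprime_imp_no_common_croot:
  fixes a b :: "int poly"
  assumes "algebraic_semidom_class.coprime a b" "b \<noteq> 0" "z \<in> croots a" "z \<in> croots b"
  shows False
proof -
  have "resultant a b \<noteq> 0" using assms(1) by (simp add: resultant_0_gcd coprime_iff_gcd_eq_1)
  moreover have "resultant (cpoly a) (cpoly b) = 0"
    by (rule resultant_eq_0_if_common_root) (use assms in \<open>auto simp: Defs.croots_def\<close>)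
  ultimately show False by simp
qed

lemma square_free_imp_pderiv_nonzero_at_root:
  fixes a :: "int poly"
  assumes "square_free a" "degree a \<noteq> 0" "poly (cpoly a) z = 0"
  shows "poly (pderiv (cpoly a)) z \<noteq> 0"
proof
  assume "poly (pderiv (cpoly a)) z = 0"
  moreover have "pderiv (cpoly a) \<noteq> 0" using assms(2) by (simp add: pderiv_eq_0_iff)
  ultimately have "resultant a (pderiv a) = 0"
    using resultant_eq_0_if_common_root[of "pderiv (cpoly a)" z "cpoly a"] assms(3)
    by (simp add: pderiv_cpoly)
  with square_free_imp_resultant_non_zero[OF assms(1)] show False by simp
qed

lemma square_free_imp_rsquarefree_cpoly:
  "square_free a \<Longrightarrow> degree a \<noteq> 0 \<Longrightarrow> rsquarefree (cpoly a)"
  unfolding rsquarefree_roots using square_free_imp_pderiv_nonzero_at_root by blast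

lemma lead_coeff_mult_prod_other_roots:
  fixes T :: "complex poly"
  assumes Q: "Q = [:-z, 1:] ^ m * T" and Tz: "poly T z \<noteq> 0"
  shows "lead_coeff Q * (\<Prod>w\<in>{w. poly Q w = 0} - {z}. (z - w) ^ order w Q) = poly T z"
proof -
  have "T \<noteq> 0" using Tz by auto
  have roots: "{w. poly Q w = 0} - {z} = {w. poly T w = 0}" using Tz unfolding Q by auto
  have order: "order w Q = order w T" if "poly T w = 0" for w
  proof -
    have "order w ([:-z, 1:] ^ m) = 0" using that Tz by (intro order_0I) auto
    then show ?thesis unfolding Q using \<open>T \<noteq> 0\<close> by (subst order_mult) auto
  qed
  have "poly T z = poly (smult (lead_coeff T) (\<Prod>w | poly T w = 0. [:-w, 1:] ^ order w T)) z"
    by (subst complex_poly_decompose) simp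
  also have "\<dots> = lead_coeff T * (\<Prod>w | poly T w = 0. (z - w) ^ order w T)"
    by (simp add: poly_prod)
  also have "lead_coeff T = lead_coeff Q"
    unfolding Q by (simp add: lead_coeff_mult lead_coeff_power)
  finally show ?thesis unfolding roots using order by simp
qed

lemma coeff_linear_power:
  "coeff ([:a, 1:] ^ n) i = of_nat (n choose i) * (a :: 'a :: comm_semiring_1) ^ (n - i)"
proof (cases "i \<le> n")
  case True
  then show ?thesis using coeff_linear_poly_power[OF True, of a 1] by simp
next
  case False
  moreover have "degree ([:a, 1:] ^ n) \<le> n" using degree_power_le[of "[:a, 1:]" n] by simp
  ultimately show ?thesis by (simp add: coeff_eq_0 binomial_eq_0)
qed

text \<open>\<open>poly T z\<close> is the coefficient of \<open>x ^ m\<close> in \<open>Q (x + z)\<close>.\<close>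
lemma norm_cofactor_at_root_le:
  fixes Q T :: "complex poly"
  assumes Q: "Q = [:-z, 1:] ^ m * T"
  shows "norm (poly T z) \<le>
    (\<Sum>k\<le>degree Q. norm (coeff Q k) * real (k choose m) * norm z ^ (k - m))"
proof -
  define R where "R = pcompose Q [:z, 1:]"
  have "pcompose [:-z, 1:] [:z, 1:] = [:0, 1:]" by (simp add: pcompose_pCons)
  then have "pcompose ([:-z, 1:] ^ m) [:z, 1:] = [:0, 1:] ^ m"
    by (induction m) (simp_all only: power_0 power_Suc pcompose_mult pcompose_1)
  then have "R = monom 1 m * pcompose T [:z, 1:]"
    unfolding R_def Q by (simp add: pcompose_mult monom_altdef)
  then have "coeff R m = poly T z"
    by (simp add: coeff_monom_mult poly_0_coeff_0[symmetric] poly_pcompose)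
  moreover have "R = (\<Sum>k\<le>degree Q. smult (coeff Q k) ([:z, 1:] ^ k))"
    unfolding R_def pcompose_altdef poly_altdef by (simp add: degree_map_poly coeff_map_poly)
  ultimately have "poly T z = (\<Sum>k\<le>degree Q. coeff Q k * (of_nat (k choose m) * z ^ (k - m)))"
    by (simp add: coeff_sum coeff_linear_power[simplified])
  also have "norm \<dots> \<le> (\<Sum>k\<le>degree Q. norm (coeff Q k * (of_nat (k choose m) * z ^ (k - m))))"
    by (rule norm_sum)
  also have "\<dots> = (\<Sum>k\<le>degree Q. norm (coeff Q k) * real (k choose m) * norm z ^ (k - m))"
    by (simp add: norm_mult norm_power mult.assoc)
  finally show ?thesis .
qed

section \<open>Upper bound for the local factors\<close>

definition l1_norm :: "int poly \<Rightarrow> real" where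
  "l1_norm p = (\<Sum>k\<le>degree p. \<bar>real_of_int (coeff p k)\<bar>)"

lemma abs_coeff_le_l1_norm: "\<bar>real_of_int (coeff p k)\<bar> \<le> l1_norm p"
proof (cases "k \<le> degree p")
  case True
  then show ?thesis unfolding l1_norm_def by (intro member_le_sum) auto
next
  case False
  then show ?thesis unfolding l1_norm_def by (simp add: coeff_eq_0 sum_nonneg)
qed

lemma one_le_l1_norm: "p \<noteq> 0 \<Longrightarrow> 1 \<le> l1_norm p"
  using abs_coeff_le_l1_norm[of p "degree p"] one_le_abs_of_int[of "lead_coeff p"] by simp

lemma one_le_Mval [simp]: "1 \<le> Mval x"
  unfolding Mval_def by simp

lemma Mval_pos [simp]: "0 < Mval x"
  using one_le_Mval[of x] by linarith

lemma Mval_nonneg [simp]: "0 \<le> Mval x"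
  using one_le_Mval[of x] by linarith

lemma norm_le_Mval: "norm x \<le> Mval x"
  unfolding Mval_def by simp

lemma Mval_inverse:
  assumes "x \<noteq> 0"
  shows "Mval (inverse x) = Mval x / norm x"
proof (cases "1 \<le> norm x")
  case True
  then have "inverse (norm x) \<le> 1" by (simp add: inverse_le_1_iff)
  with True assms show ?thesis by (simp add: Mval_def norm_inverse max_def)
next
  case False
  then have "1 < inverse (norm x)" using assms by (simp add: one_less_inverse_iff)
  with False show ?thesis by (simp add: Mval_def norm_inverse max_def divide_inverse)
qed

lemma prod_set_le_prod_list:
  fixes f :: "'a \<Rightarrow> real"
  assumes "\<And>x. x \<in> set xs \<Longrightarrow> 1 \<le> f x"
  shows "(\<Prod>x\<in>set xs. f x) \<le> prod_list (map f xs)"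
  using assms
proof (induction xs)
  case (Cons a xs)
  then have IH: "(\<Prod>x\<in>set xs. f x) \<le> prod_list (map f xs)" and "1 \<le> f a" by auto
  moreover have "1 \<le> prod_list (map f xs)" using Cons.prems by (intro prod_list_ge1) auto
  ultimately show ?case
    by (cases "a \<in> set xs") (auto simp: insert_absorb intro: order_trans[OF IH] mult_mono)
qed simp

lemma prod_croots_Mval_le_l1_norm:
  assumes "p \<noteq> 0"
  shows "(\<Prod>z\<in>croots p. Mval z) \<le> l1_norm p"
proof -
  define xs where "xs = complex_roots_complex (cpoly p)"
  have "croots p \<subseteq> set xs"
  proof
    fix z assume "z \<in> croots p"
    then have "poly (smult (lead_coeff (cpoly p)) (\<Prod>a\<leftarrow>xs. [:- a, 1:])) z = 0"
      unfolding xs_def complex_roots(1) by (simp add: Defs.croots_def)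
    moreover have "poly (\<Prod>a\<leftarrow>ys. [:- a, 1:]) z = (\<Prod>a\<leftarrow>ys. z - a)" for ys
      by (induction ys) (auto simp: algebra_simps)
    ultimately show "z \<in> set xs" using assms by (auto simp: prod_list_zero_iff)
  qed
  then have "(\<Prod>z\<in>croots p. Mval z) \<le> (\<Prod>z\<in>set xs. Mval z)"
    by (intro prod_mono2) auto
  also have "\<dots> \<le> mahler_measure_monic (cpoly p)"
    unfolding mahler_measure_monic_def xs_def Mval_def
    by (intro prod_set_le_prod_list[of _ "\<lambda>z. max 1 (norm z)", unfolded o_def]) auto
  also have "\<dots> \<le> \<bar>real_of_int (lead_coeff p)\<bar> * mahler_measure_monic (cpoly p)"
    using one_le_abs_of_int[of "lead_coeff p"] assms mahler_measure_monic_ge_0[of "cpoly p"]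
    by (simp add: mult_le_cancel_right1)
  also have "\<dots> = mahler_measure p"
    by (simp add: mahler_measure_def mahler_measure_poly_via_monic cpoly_def)
  also have "\<dots> \<le> sqrt (real_of_int (\<Sum>a\<leftarrow>coeffs p. a * a))"
    by (rule Landau_inequality_mahler_measure)
  also have "\<dots> = L2_set (\<lambda>k. real_of_int (coeff p k)) {..degree p}"
    using assms unfolding L2_set_def
    by (simp add: coeffs_def interv_sum_list_conv_sum_set_nat atLeast0LessThan lessThan_Suc_atMost
        power2_eq_square o_def) (simp add: lessThan_Suc_atMost[symmetric])
  also have "\<dots> \<le> l1_norm p"
    unfolding l1_norm_def by (rule L2_set_le_sum_abs)
  finally show ?thesis .
qed

lemma choose_mult_norm_power_le_Mval:
  assumes "k \<le> n"
  shows "real (k choose m) * norm z ^ (k - m) \<le> real n ^ m * Mval z ^ n"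
proof (rule mult_mono)
  show "real (k choose m) \<le> real n ^ m"
  proof (cases "m \<le> k")
    case True
    have "k choose m \<le> k ^ m" by (rule binomial_le_pow[OF True])
    also have "\<dots> \<le> n ^ m" using assms by (rule power_mono) simp
    finally have "real (k choose m) \<le> real (n ^ m)" by (simp only: of_nat_le_iff)
    then show ?thesis by simp
  qed (simp add: binomial_eq_0)
  have "norm z ^ (k - m) \<le> Mval z ^ (k - m)" by (intro power_mono norm_le_Mval) simp
  also have "\<dots> \<le> Mval z ^ n" using assms by (intro power_increasing) auto
  finally show "norm z ^ (k - m) \<le> Mval z ^ n" .
qed auto

lemma norm_Pfac_le:
  assumes p: "p \<noteq> 0" and z: "z \<in> croots p"
  shows "norm (Pfac p z) \<le> real (degree p) ^ order z (cpoly p) * l1_norm p * Mval z ^ degree p"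
proof -
  define P m n where "P = cpoly p" and "m = order z P" and "n = degree p"
  obtain T where PT: "P = [:-z, 1:] ^ m * T" and "\<not> [:-z, 1:] dvd T"
    using order_decomp[of P z] p unfolding P_def m_def by auto
  then have Tz: "poly T z \<noteq> 0" by (simp add: poly_eq_0_iff_dvd)
  have "norm (Pfac p z) \<le> norm (lead_coeff P) * norm (Pfac p z)"
    using one_le_abs_of_int[of "lead_coeff p"] p by (simp add: P_def mult_le_cancel_right1)
  also have "\<dots> = norm (poly T z)"
    using arg_cong[OF lead_coeff_mult_prod_other_roots[OF PT Tz], of norm]
    by (simp add: Pfac_def Defs.croots_def P_def norm_mult)
  also have "\<dots> \<le> (\<Sum>k\<le>n. norm (coeff P k) * real (k choose m) * norm z ^ (k - m))"
    using norm_cofactor_at_root_le[OF PT] by (simp add: P_def n_def)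
  also have "\<dots> \<le> (\<Sum>k\<le>n. \<bar>real_of_int (coeff p k)\<bar> * (real n ^ m * Mval z ^ n))"
    using choose_mult_norm_power_le_Mval
    by (intro sum_mono) (simp add: P_def mult.assoc mult_left_mono)
  also have "\<dots> = real n ^ m * l1_norm p * Mval z ^ n"
    by (simp add: l1_norm_def n_def sum_distrib_right[symmetric] mult_ac)
  finally show ?thesis unfolding m_def n_def P_def .
qed

lemma prod_Mval_Pfac_le:
  assumes p: "p \<noteq> 0" and deg: "1 \<le> degree p"
  shows "(\<Prod>z\<in>croots p. Mval (Pfac p z)) \<le> (real (degree p) * l1_norm p ^ 2) ^ degree p"
proof -
  define n S where "n = degree p" and "S = l1_norm p"
  have S: "1 \<le> S" using one_le_l1_norm[OF p] by (simp add: S_def)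
  have "Mval (Pfac p z) \<le> real n ^ order z (cpoly p) * S * Mval z ^ n" if "z \<in> croots p" for z
  proof -
    have "1 * 1 * 1 \<le> real n ^ order z (cpoly p) * S * Mval z ^ n"
      using deg S by (intro mult_mono) (auto simp: n_def one_le_power)
    with norm_Pfac_le[OF p that] show ?thesis by (simp add: Mval_def n_def S_def)
  qed
  then have "(\<Prod>z\<in>croots p. Mval (Pfac p z)) \<le>
      (\<Prod>z\<in>croots p. real n ^ order z (cpoly p) * S * Mval z ^ n)"
    by (intro prod_mono) auto
  also have "\<dots> = real n ^ n * S ^ card (croots p) * (\<Prod>z\<in>croots p. Mval z) ^ n"
    using sum_order_croots[OF p]
    by (simp add: prod.distrib prod_power_distrib power_sum[symmetric] n_def)
  also have "\<dots> \<le> real n ^ n * S ^ n * S ^ n"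
    using card_croots_le[OF p] deg S prod_croots_Mval_le_l1_norm[OF p]
    by (intro mult_mono power_increasing power_mono) (auto simp: n_def S_def prod_nonneg)
  also have "\<dots> = (real n * S ^ 2) ^ n"
    by (simp add: power_mult_distrib power2_eq_square)
  finally show ?thesis unfolding n_def S_def .
qed

section \<open>Lower bound for the product of the local factors\<close>

locale coprime_square_free_decomposition =
  fixes p :: "int poly" and c :: int and B :: "(int poly \<times> nat) set"
  assumes finite_factors: "finite B"
    and factorization: "p = smult c (\<Prod>(a, i)\<in>B. a ^ i)"
    and factor: "(a, i) \<in> B \<Longrightarrow> square_free a \<and> degree a \<noteq> 0 \<and> 0 < i \<and> 0 < lead_coeff a"
    and coprime_factors: "(a, i) \<in> B \<Longrightarrow> (b, j) \<in> B \<Longrightarrow> (a, i) \<noteq> (b, j) \<Longrightarrow>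
      algebraic_semidom_class.coprime a b"
    and nonzero: "p \<noteq> 0"
begin

declare finite_factors [simp]

lemma factorD:
  assumes "(a, i) \<in> B"
  shows "square_free a" "degree a \<noteq> 0" "0 < i" "a \<noteq> 0" "0 < lead_coeff a"
  using factor[OF assms] by auto

lemma constant_nonzero: "c \<noteq> 0"
  using factorization nonzero by auto

lemma cpoly_factorization: "cpoly p = smult (of_int c) (\<Prod>(a, i)\<in>B. cpoly a ^ i)"
  by (subst factorization) (simp add: cpoly_def hom_distribs case_prod_unfold)

lemma croots_factorization: "croots p = (\<Union>(a, i)\<in>B. croots a)"
proof -
  have exponent_pos: "0 < snd x" if "x \<in> B" for x
    using factorD(3)[of "fst x" "snd x"] that by simp
  have "poly (cpoly p) z = 0 \<longleftrightarrow> (\<exists>x\<in>B. poly (cpoly (fst x)) z = 0)" for z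
    using constant_nonzero exponent_pos
    by (auto simp: cpoly_factorization poly_prod case_prod_unfold prod_zero_iff)
  then show ?thesis unfolding Defs.croots_def by (auto; metis fst_conv)
qed

lemma croots_factors_disjoint:
  assumes "(a, i) \<in> B" "(b, j) \<in> B" "(a, i) \<noteq> (b, j)"
  shows "croots a \<inter> croots b = {}"
  using coprime_imp_no_common_croot[OF coprime_factors[OF assms]] factorD(4)[OF assms(2)] by blast

lemma prod_croots_eq_prod_factors:
  "(\<Prod>z\<in>croots p. f z) = (\<Prod>(a, i)\<in>B. \<Prod>z\<in>croots a. f z)"
proof -
  have "\<forall>x\<in>B. finite (croots (fst x))"
  proof
    fix x assume "x \<in> B"
    then have "fst x \<noteq> 0" using factorD(4)[of "fst x" "snd x"] by simp
    then show "finite (croots (fst x))" by (rule finite_croots)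
  qed
  moreover have "\<forall>x\<in>B. \<forall>y\<in>B. x \<noteq> y \<longrightarrow> croots (fst x) \<inter> croots (fst y) = {}"
  proof (intro ballI impI)
    fix x y assume "x \<in> B" "y \<in> B" "x \<noteq> y"
    then show "croots (fst x) \<inter> croots (fst y) = {}"
      using croots_factors_disjoint[of "fst x" "snd x" "fst y" "snd y"] by simp
  qed
  ultimately have "(\<Prod>z\<in>(\<Union>x\<in>B. croots (fst x)). f z) = (\<Prod>x\<in>B. \<Prod>z\<in>croots (fst x). f z)"
    by (intro prod.UNION_disjoint) auto
  then show ?thesis unfolding croots_factorization case_prod_unfold .
qed

text \<open>At a root \<open>z\<close> of \<open>a\<close>, write \<open>a = (x - z) S\<close>; then \<open>S(z) = a'(z)\<close>, so \<open>c\<close> times the value of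
  the cofactor is the value of the cofactor of \<open>(x - z) ^ i\<close> in \<open>p\<close>.\<close>
definition cofactor :: "int poly \<Rightarrow> nat \<Rightarrow> int poly" where
  "cofactor a i = pderiv a ^ i * (\<Prod>(b, j)\<in>B - {(a, i)}. b ^ j)"

lemma cpoly_eq_linear_power_mult_at_root:
  assumes ai: "(a, i) \<in> B" and z: "z \<in> croots a"
  obtains T where "cpoly p = [:-z, 1:] ^ i * T"
    and "poly T z = of_int c * poly (cpoly (cofactor a i)) z" and "poly T z \<noteq> 0"
proof -
  obtain S where S: "cpoly a = [:-z, 1:] * S"
    using z by (auto simp: Defs.croots_def poly_eq_0_iff_dvd dvd_def)
  have "pderiv [:-z, 1:] = (1 :: complex poly)" by (simp add: pderiv_pCons)
  then have S_pderiv: "poly (pderiv (cpoly a)) z = poly S z"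
    unfolding S pderiv_mult by simp
  moreover have "poly (pderiv (cpoly a)) z \<noteq> 0"
    using square_free_imp_pderiv_nonzero_at_root[OF factorD(1,2)[OF ai]] z
    by (simp add: Defs.croots_def)
  ultimately have Sz: "poly S z \<noteq> 0" by simp
  define Rest where "Rest = (\<Prod>(b, j)\<in>B - {(a, i)}. cpoly b ^ j)"
  have Rest_z: "poly Rest z \<noteq> 0"
  proof -
    have "poly (cpoly (fst x)) z \<noteq> 0" if "x \<in> B - {(a, i)}" for x
      using croots_factors_disjoint[OF ai, of "fst x" "snd x"] z that by (auto simp: Defs.croots_def)
    then show ?thesis by (simp add: Rest_def poly_prod prod_zero_iff case_prod_unfold)
  qed
  have "(\<Prod>(b, j)\<in>B. cpoly b ^ j) = cpoly a ^ i * Rest"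
    using prod.remove[OF _ ai, of "\<lambda>(b, j). cpoly b ^ j"] unfolding Rest_def by simp
  then have p_eq: "cpoly p = [:-z, 1:] ^ i * smult (of_int c) (S ^ i * Rest)"
    unfolding cpoly_factorization S by (simp only: power_mult_distrib mult.assoc mult_smult_right[symmetric])
  have cofactor_eq: "cpoly (cofactor a i) = pderiv (cpoly a) ^ i * Rest"
    unfolding cofactor_def Rest_def
    by (simp add: cpoly_def hom_distribs case_prod_unfold of_int_hom.map_poly_pderiv)
  show ?thesis
  proof (rule that[OF p_eq])
    show "poly (smult (of_int c) (S ^ i * Rest)) z = of_int c * poly (cpoly (cofactor a i)) z"
      unfolding cofactor_eq poly_mult poly_power S_pderiv by simp
    show "poly (smult (of_int c) (S ^ i * Rest)) z \<noteq> 0"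
      using Sz Rest_z constant_nonzero by simp
  qed
qed

lemma norm_Pfac_eq_cofactor:
  assumes "(a, i) \<in> B" and "z \<in> croots a"
  shows "\<bar>real_of_int (lead_coeff p)\<bar> * norm (Pfac p z) =
    \<bar>real_of_int c\<bar> * norm (poly (cpoly (cofactor a i)) z)"
proof -
  obtain T where T: "cpoly p = [:-z, 1:] ^ i * T"
    "poly T z = of_int c * poly (cpoly (cofactor a i)) z" "poly T z \<noteq> 0"
    using cpoly_eq_linear_power_mult_at_root[OF assms] .
  show ?thesis
    using arg_cong[OF lead_coeff_mult_prod_other_roots[OF T(1,3)], of norm] T(2)
    by (simp add: Pfac_def Defs.croots_def norm_mult)
qed

lemma cofactor_nonzero_at_root:
  assumes "(a, i) \<in> B" and "z \<in> croots a"
  shows "poly (cpoly (cofactor a i)) z \<noteq> 0"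
proof -
  obtain T where "poly T z = of_int c * poly (cpoly (cofactor a i)) z" "poly T z \<noteq> 0"
    using cpoly_eq_linear_power_mult_at_root[OF assms] by blast
  then show ?thesis by auto
qed

lemma degree_factorization: "degree p = (\<Sum>(a, i)\<in>B. degree a * i)"
proof -
  have "degree p = degree (\<Prod>(a, i)\<in>B. a ^ i)"
    using factorization constant_nonzero by simp
  also have "\<dots> = (\<Sum>(a, i)\<in>B. degree (a ^ i))"
    unfolding case_prod_unfold by (rule degree_prod_eq_sum_degree) (auto dest: factorD(4))
  also have "\<dots> = (\<Sum>(a, i)\<in>B. degree a * i)"
    by (intro sum.cong) (auto simp: degree_power_eq dest: factorD(4))
  finally show ?thesis .
qed

lemma sum_degree_factors_le: "(\<Sum>(a, i)\<in>B. degree a) \<le> degree p"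
  unfolding degree_factorization by (intro sum_mono) (auto dest: factorD(3))

lemma degree_cofactor_le:
  assumes ai: "(a, i) \<in> B"
  shows "degree (cofactor a i) \<le> degree p"
proof -
  have "degree (cofactor a i) \<le> degree (pderiv a ^ i) + degree (\<Prod>(b, j)\<in>B - {(a, i)}. b ^ j)"
    unfolding cofactor_def by (rule degree_mult_le)
  also have "degree (pderiv a ^ i) \<le> degree a * i"
    by (metis degree_power_le degree_pderiv diff_le_self mult_le_mono1 order_trans)
  also have "degree (\<Prod>(b, j)\<in>B - {(a, i)}. b ^ j) \<le> (\<Sum>(b, j)\<in>B - {(a, i)}. degree b * j)"
    unfolding case_prod_unfold
    by (rule order_trans[OF degree_prod_sum_le]) (auto intro!: sum_mono degree_power_le)
  also have "degree a * i + (\<Sum>(b, j)\<in>B - {(a, i)}. degree b * j) = degree p"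
    unfolding degree_factorization using sum.remove[OF _ ai, of "\<lambda>(b, j). degree b * j"] by simp
  finally show ?thesis by simp
qed

lemma prod_lead_coeff_factors_le:
  "(\<Prod>(a, i)\<in>B. real_of_int (lead_coeff a)) \<le> \<bar>real_of_int (lead_coeff p)\<bar>"
proof -
  define L where "L = (\<Prod>(a, i)\<in>B. lead_coeff a ^ i)"
  have L_nonneg: "0 \<le> L"
    unfolding L_def using factorD(5) by (intro prod_nonneg) (auto simp: less_imp_le)
  have "(\<Prod>(a, i)\<in>B. lead_coeff a) \<le> L"
    unfolding L_def using factorD(5) factorD(3)
    by (intro prod_mono) (auto simp: int_one_le_iff_zero_less less_imp_le intro!: self_le_power)
  also have "\<dots> \<le> \<bar>c\<bar> * L"
    using constant_nonzero L_nonneg mult_right_mono[of 1 "\<bar>c\<bar>"]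
    by (simp add: int_one_le_iff_zero_less)
  also have "\<dots> = \<bar>lead_coeff p\<bar>"
    using arg_cong[OF factorization, of lead_coeff] L_nonneg
    by (simp add: L_def lead_coeff_prod lead_coeff_power case_prod_unfold abs_mult)
  finally show ?thesis by (simp add: case_prod_unfold flip: of_int_abs of_int_prod of_int_le_iff)
qed

lemma one_le_prod_croots_cofactor:
  assumes ai: "(a, i) \<in> B"
  shows "1 \<le> real_of_int (lead_coeff a) ^ degree p *
    (\<Prod>z\<in>croots a. norm (poly (cpoly (cofactor a i)) z))"
proof -
  have eq: "(\<Prod>z\<in>croots a. norm (poly (cpoly (cofactor a i)) z)) =
      (\<Prod>z\<in>#proots (cpoly a). norm (poly (cpoly (cofactor a i)) z))"
    unfolding Defs.croots_def using factorD[OF ai]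
    by (intro prod_roots_eq_prod_proots_if_rsquarefree) (auto simp: square_free_imp_rsquarefree_cpoly)
  have nonneg: "0 \<le> (\<Prod>z\<in>#proots (cpoly a). norm (poly (cpoly (cofactor a i)) z))"
    unfolding eq[symmetric] by (simp add: prod_nonneg)
  have "1 \<le> \<bar>real_of_int (lead_coeff a)\<bar> ^ degree (cofactor a i) *
      (\<Prod>z\<in>#proots (cpoly a). norm (poly (cpoly (cofactor a i)) z))"
    using factorD(4)[OF ai] cofactor_nonzero_at_root[OF ai]
    by (intro one_le_prod_proots_norm_poly) (auto simp: Defs.croots_def)
  also have "\<dots> \<le> real_of_int (lead_coeff a) ^ degree p *
      (\<Prod>z\<in>#proots (cpoly a). norm (poly (cpoly (cofactor a i)) z))"
    using factorD(5)[OF ai] degree_cofactor_le[OF ai] nonneg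
    by (intro mult_right_mono) (simp_all add: power_increasing)
  finally show ?thesis unfolding eq .
qed

lemma prod_croots_factor_norm_Pfac_ge:
  assumes ai: "(a, i) \<in> B"
  shows "(1 / \<bar>real_of_int (lead_coeff p)\<bar>) ^ degree a * (1 / real_of_int (lead_coeff a)) ^ degree p
    \<le> (\<Prod>z\<in>croots a. norm (Pfac p z))"
proof -
  define l where "l = \<bar>real_of_int (lead_coeff p)\<bar>"
  define \<Gamma> where "\<Gamma> = (\<Prod>z\<in>croots a. norm (poly (cpoly (cofactor a i)) z))"
  have l: "1 \<le> l" unfolding l_def using one_le_abs_of_int nonzero by simp
  have lc_a: "0 < real_of_int (lead_coeff a)" using factorD(5)[OF ai] by simp
  have "(1 / l) ^ degree a \<le> (1 / l) ^ card (croots a)"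
    using l card_croots_le factorD(4)[OF ai] by (intro power_decreasing) auto
  moreover have "(1 / real_of_int (lead_coeff a)) ^ degree p \<le> \<Gamma>"
    using one_le_prod_croots_cofactor[OF ai] lc_a by (simp add: \<Gamma>_def field_simps)
  ultimately have "(1 / l) ^ degree a * (1 / real_of_int (lead_coeff a)) ^ degree p \<le>
      (1 / l) ^ card (croots a) * \<Gamma>"
    using l lc_a by (intro mult_mono) auto
  also have "\<dots> = (\<Prod>z\<in>croots a. norm (poly (cpoly (cofactor a i)) z) / l)"
    by (simp add: \<Gamma>_def prod_dividef field_simps)
  also have "\<dots> \<le> (\<Prod>z\<in>croots a. norm (Pfac p z))"
  proof (intro prod_mono conjI)
    fix z assume "z \<in> croots a"
    then have "l * norm (Pfac p z) = \<bar>real_of_int c\<bar> * norm (poly (cpoly (cofactor a i)) z)"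
      using norm_Pfac_eq_cofactor[OF ai] by (simp add: l_def)
    moreover have "1 \<le> \<bar>real_of_int c\<bar>" using one_le_abs_of_int constant_nonzero by simp
    ultimately have "norm (poly (cpoly (cofactor a i)) z) \<le> l * norm (Pfac p z)"
      using mult_right_mono[of 1 "\<bar>real_of_int c\<bar>" "norm (poly (cpoly (cofactor a i)) z)"] by simp
    then show "norm (poly (cpoly (cofactor a i)) z) / l \<le> norm (Pfac p z)"
      using l by (simp add: divide_le_eq mult.commute)
  qed (use l in simp)
  finally show ?thesis unfolding l_def .
qed

lemma prod_norm_Pfac_ge:
  "1 / \<bar>real_of_int (lead_coeff p)\<bar> ^ (2 * degree p) \<le> (\<Prod>z\<in>croots p. norm (Pfac p z))"
proof -
  define l n where "l = \<bar>real_of_int (lead_coeff p)\<bar>" and "n = degree p"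
  have l: "1 \<le> l" unfolding l_def using one_le_abs_of_int nonzero by simp
  have lc_pos: "0 < real_of_int (lead_coeff a)" if "(a, i) \<in> B" for a i
    using factorD(5)[OF that] by simp
  then have prod_lc_pos: "0 < (\<Prod>(a, i)\<in>B. real_of_int (lead_coeff a))"
    by (intro prod_pos) auto
  have "1 / l ^ (2 * n) = (1 / l) ^ n * (1 / l) ^ n"
    by (simp add: power_one_over mult_2 power_add)
  also have "\<dots> \<le> (1 / l) ^ (\<Sum>(a, i)\<in>B. degree a) *
      (1 / (\<Prod>(a, i)\<in>B. real_of_int (lead_coeff a))) ^ n"
    using l sum_degree_factors_le prod_lead_coeff_factors_le prod_lc_pos
    by (intro mult_mono power_decreasing power_mono divide_left_mono)
      (auto simp: l_def[symmetric] n_def)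
  also have "\<dots> = (\<Prod>(a, i)\<in>B. (1 / l) ^ degree a * (1 / real_of_int (lead_coeff a)) ^ n)"
  proof -
    have "1 / (\<Prod>(a, i)\<in>B. real_of_int (lead_coeff a)) =
        (\<Prod>(a, i)\<in>B. 1 / real_of_int (lead_coeff a))"
      by (simp add: prod_dividef case_prod_unfold)
    then show ?thesis by (simp add: prod.distrib power_sum prod_power_distrib case_prod_unfold)
  qed
  also have "\<dots> \<le> (\<Prod>(a, i)\<in>B. \<Prod>z\<in>croots a. norm (Pfac p z))"
  proof (rule prod_mono)
    fix x assume "x \<in> B"
    moreover obtain a i where x: "x = (a, i)" by force
    ultimately have ai: "(a, i) \<in> B" by simp
    have "0 \<le> (1 / l) ^ degree a * (1 / real_of_int (lead_coeff a)) ^ n"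
      using l lc_pos[OF ai] by simp
    with prod_croots_factor_norm_Pfac_ge[OF ai]
    show "0 \<le> (case x of (a, i) \<Rightarrow> (1 / l) ^ degree a * (1 / real_of_int (lead_coeff a)) ^ n) \<and>
      (case x of (a, i) \<Rightarrow> (1 / l) ^ degree a * (1 / real_of_int (lead_coeff a)) ^ n) \<le>
      (case x of (a, i) \<Rightarrow> \<Prod>z\<in>croots a. norm (Pfac p z))"
      by (simp add: x l_def n_def)
  qed
  also have "\<dots> = (\<Prod>z\<in>croots p. norm (Pfac p z))"
    by (rule prod_croots_eq_prod_factors[symmetric])
  finally show ?thesis unfolding l_def n_def .
qed

end

lemma prod_mset_prime_factorization_int_poly:
  assumes "(p :: int poly) \<noteq> 0"
  shows "prod_mset (prime_factorization p) = normalize p"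
proof -
  have "image_mset normalize (prime_factorization p) = prime_factorization p"
    by (rule image_mset_cong[where g = id, simplified]) (auto intro: normalize_prime)
  then have "normalize (prod_mset (prime_factorization p)) = prod_mset (prime_factorization p)"
    by (simp add: normalize_prod_mset)
  with prod_mset_prime_factorization_weak[OF assms] show ?thesis by simp
qed

lemma prime_int_poly_lead_coeff_pos:
  fixes q :: "int poly"
  assumes "prime q"
  shows "0 < lead_coeff q"
proof -
  have "lead_coeff q = lead_coeff q div sgn (lead_coeff q)"
    using coeff_normalize[of q "degree q"] normalize_prime[OF assms] by (simp add: unit_factor_int_def)
  moreover have "lead_coeff q \<noteq> 0" using assms by auto
  ultimately show ?thesis by (cases "0 < lead_coeff q") (auto simp: sgn_if)
qed

text \<open>The constant prime factors and the unit factor make up \<open>c\<close>.\<close>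
lemma smult_prod_nonconstant_prime_factors:
  fixes p :: "int poly"
  assumes p: "p \<noteq> 0"
  obtains c where
    "p = smult c (\<Prod>q\<in>{q \<in> prime_factors p. degree q \<noteq> 0}. q ^ count (prime_factorization p) q)"
proof -
  define P Q K where "P = prime_factorization p"
    and "Q = {q \<in> prime_factors p. degree q \<noteq> 0}" and "K = {q \<in> prime_factors p. degree q = 0}"
  have fin: "finite Q" "finite K" by (simp_all add: Q_def K_def)
  have "p = unit_factor p * (\<Prod>q\<in>prime_factors p. q ^ count P q)"
    using p by (simp add: P_def prod_mset_multiplicity[symmetric]
        prod_mset_prime_factorization_int_poly)
  also have "prime_factors p = K \<union> Q" by (auto simp: Q_def K_def)
  also have "(\<Prod>q\<in>K \<union> Q. q ^ count P q) = (\<Prod>q\<in>K. q ^ count P q) * (\<Prod>q\<in>Q. q ^ count P q)"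
    using fin by (intro prod.union_disjoint) (auto simp: Q_def K_def)
  finally have p_eq: "p = (unit_factor p * (\<Prod>q\<in>K. q ^ count P q)) * (\<Prod>q\<in>Q. q ^ count P q)"
    by (simp add: mult.assoc)
  have "degree (q ^ count P q) = 0" if "q \<in> K" for q
    using that degree_power_le[of q "count P q"] by (simp add: K_def)
  then have "degree (\<Prod>q\<in>K. q ^ count P q) = 0"
    using degree_prod_sum_le[of K "\<lambda>q. q ^ count P q"] fin by simp
  then have "degree (unit_factor p * (\<Prod>q\<in>K. q ^ count P q)) = 0"
    by (metis degree_mult_le unit_factor_poly_def degree_pCons_0 add_0 le_zero_eq)
  then obtain c where "unit_factor p * (\<Prod>q\<in>K. q ^ count P q) = [:c:]" by (meson degree_eq_zeroE)
  with p_eq have "p = smult c (\<Prod>q\<in>Q. q ^ count P q)" by simp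
  then show ?thesis unfolding P_def Q_def by (rule that)
qed

lemma coprime_square_free_decomposition_exists:
  assumes p: "p \<noteq> 0"
  shows "\<exists>c B. coprime_square_free_decomposition p c B"
proof -
  define P Q where "P = prime_factorization p" and "Q = {q \<in> prime_factors p. degree q \<noteq> 0}"
  define B where "B = (\<lambda>q. (q, count P q)) ` Q"
  obtain c where "p = smult c (\<Prod>q\<in>Q. q ^ count P q)"
    using smult_prod_nonconstant_prime_factors[OF p] unfolding P_def Q_def .
  also have "(\<Prod>q\<in>Q. q ^ count P q) = (\<Prod>(a, i)\<in>B. a ^ i)"
    unfolding B_def by (subst prod.reindex) (auto simp: inj_on_def)
  finally have "p = smult c (\<Prod>(a, i)\<in>B. a ^ i)" .
  moreover have "square_free a \<and> degree a \<noteq> 0 \<and> 0 < i \<and> 0 < lead_coeff a" if "(a, i) \<in> B" for a i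
  proof -
    from that have "prime a" "degree a \<noteq> 0" "i = count P a" "a \<in># P"
      by (auto simp: B_def Q_def P_def)
    then show ?thesis
      by (auto simp: irreducible_imp_square_free prime_elem_imp_irreducible prime_imp_prime_elem
          prime_int_poly_lead_coeff_pos)
  qed
  moreover have "algebraic_semidom_class.coprime a b"
    if "(a, i) \<in> B" "(b, j) \<in> B" "(a, i) \<noteq> (b, j)" for a b i j
    using that by (auto simp: B_def Q_def intro: primes_coprime)
  moreover have "finite B" by (simp add: B_def Q_def)
  ultimately have "coprime_square_free_decomposition p c B"
    unfolding coprime_square_free_decomposition_def using p by (auto simp: B_def)
  then show ?thesis by blast
qed

lemma prod_norm_Pfac_ge_lead_coeff:
  assumes "p \<noteq> 0"
  shows "1 / \<bar>real_of_int (lead_coeff p)\<bar> ^ (2 * degree p) \<le> (\<Prod>z\<in>croots p. norm (Pfac p z))"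
proof -
  obtain c B where "coprime_square_free_decomposition p c B"
    using coprime_square_free_decomposition_exists[OF assms] by blast
  then interpret coprime_square_free_decomposition p c B .
  show ?thesis by (rule prod_norm_Pfac_ge)
qed

lemma coeff_bounded_abs_coeff_le: "coeff_bounded p \<tau> \<Longrightarrow> \<bar>real_of_int (coeff p k)\<bar> \<le> 2 ^ \<tau>"
  unfolding coeff_bounded_def by (metis less_imp_le of_int_abs of_int_le_iff of_int_numeral of_int_power)

lemma coeff_bounded_l1_norm_le:
  assumes "coeff_bounded p \<tau>"
  shows "l1_norm p \<le> real (degree p + 1) * 2 ^ \<tau>"
proof -
  have "l1_norm p \<le> (\<Sum>k\<le>degree p. (2::real) ^ \<tau>)"
    unfolding l1_norm_def using coeff_bounded_abs_coeff_le[OF assms] by (intro sum_mono)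
  then show ?thesis by simp
qed

lemma coeff_bounded_imp_one_le:
  assumes "coeff_bounded p \<tau>" and "p \<noteq> 0"
  shows "1 \<le> \<tau>"
proof -
  have "\<bar>lead_coeff p\<bar> < 2 ^ \<tau>" using assms(1) unfolding coeff_bounded_def by blast
  moreover have "1 \<le> \<bar>lead_coeff p\<bar>" using assms(2) by (simp add: int_one_le_iff_zero_less)
  ultimately show ?thesis by (cases \<tau>) auto
qed

lemma prod_norm_Pfac_ge_coeff_bounded:
  assumes bounded: "coeff_bounded p \<tau>" and p: "p \<noteq> 0"
  shows "2 powr (- 2 * real (degree p) * real \<tau>) \<le> (\<Prod>z\<in>croots p. norm (Pfac p z))"
proof -
  define n l where "n = degree p" and "l = \<bar>real_of_int (lead_coeff p)\<bar>"
  have l: "1 \<le> l" "l \<le> 2 ^ \<tau>"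
    using one_le_abs_of_int[of "lead_coeff p"] coeff_bounded_abs_coeff_le[OF bounded] p
    by (auto simp: l_def)
  have "2 powr (- 2 * real n * real \<tau>) = 1 / 2 powr (real (2 * n * \<tau>))"
    by (simp add: powr_minus_divide[symmetric])
  also have "2 powr (real (2 * n * \<tau>)) = (2::real) ^ (2 * n * \<tau>)"
    by (rule powr_realpow) simp
  also have "\<dots> = (2 ^ \<tau>) ^ (2 * n)"
    by (simp add: power_mult[symmetric] mult_ac)
  also have "1 / (2 ^ \<tau>) ^ (2 * n) \<le> 1 / l ^ (2 * n)"
    using l by (intro divide_left_mono power_mono mult_pos_pos) auto
  also have "\<dots> \<le> (\<Prod>z\<in>croots p. norm (Pfac p z))"
    using prod_norm_Pfac_ge_lead_coeff[OF p] by (simp add: n_def l_def)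
  finally show ?thesis by (simp add: n_def)
qed

lemma log_prod:
  assumes "finite A" and "\<And>x. x \<in> A \<Longrightarrow> 0 < f x"
  shows "log b (\<Prod>x\<in>A. f x) = (\<Sum>x\<in>A. log b (f x))"
  using assms
proof (induction A rule: finite_induct)
  case (insert x F)
  have "0 < (\<Prod>x\<in>F. f x)" "0 < f x" using insert by (auto intro: prod_pos)
  then have "log b (f x * prod f F) = log b (f x) + log b (prod f F)" by (simp add: log_mult)
  with insert show ?case by simp
qed simp

lemma Pfac_nonzero: "p \<noteq> 0 \<Longrightarrow> Pfac p z \<noteq> 0"
  unfolding Pfac_def using finite_croots by (auto simp: prod_zero_iff)

lemma sum_log_Mval_inverse_Pfac:
  assumes p: "p \<noteq> 0"
  shows "(\<Sum>z\<in>croots p. log 2 (Mval (inverse (Pfac p z)))) =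
    log 2 (\<Prod>z\<in>croots p. Mval (Pfac p z)) - log 2 (\<Prod>z\<in>croots p. norm (Pfac p z))"
proof -
  have "log 2 (Mval (inverse (Pfac p z))) = log 2 (Mval (Pfac p z)) - log 2 (norm (Pfac p z))" for z
  proof -
    have "log 2 (Mval (inverse (Pfac p z))) = log 2 (Mval (Pfac p z) / norm (Pfac p z))"
      by (simp add: Mval_inverse Pfac_nonzero[OF p])
    also have "\<dots> = log 2 (Mval (Pfac p z)) - log 2 (norm (Pfac p z))"
      using Pfac_nonzero[OF p] by (intro log_divide_pos) auto
    finally show ?thesis .
  qed
  then show ?thesis
    using Pfac_nonzero[OF p] finite_croots[OF p] by (simp add: sum_subtractf log_prod)
qed

lemma sum_log_Mval_inverse_Pfac_le:
  assumes bounded: "coeff_bounded p \<tau>" and deg: "degree p = n" and n: "1 \<le> n"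
  shows "(\<Sum>z\<in>croots p. log 2 (Mval (inverse (Pfac p z)))) \<le>
    3 * n * log 2 n + 2 * n + 4 * n * \<tau>"
proof -
  define S where "S = l1_norm p"
  have p: "p \<noteq> 0" using deg n by auto
  have S: "1 \<le> S" "S \<le> 2 * n * 2 ^ \<tau>"
    using one_le_l1_norm[OF p] coeff_bounded_l1_norm_le[OF bounded] deg n
    by (auto simp: S_def intro: order_trans)
  have "log 2 (\<Prod>z\<in>croots p. Mval (Pfac p z)) \<le> log 2 ((n * S ^ 2) ^ n)"
    using prod_Mval_Pfac_le[OF p] deg n by (intro log_mono) (auto simp: S_def prod_pos)
  also have "\<dots> = n * log 2 n + 2 * n * log 2 S"
    using n S by (simp add: log_mult log_nat_power algebra_simps)
  also have "\<dots> \<le> n * log 2 n + 2 * n * (1 + log 2 n + \<tau>)"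
  proof -
    have "log 2 S \<le> log 2 (2 * n * 2 ^ \<tau>)" using S by (intro log_mono) auto
    also have "\<dots> = 1 + log 2 n + \<tau>" using n by (simp add: log_mult log_nat_power)
    finally show ?thesis by (intro add_left_mono mult_left_mono) auto
  qed
  finally have "log 2 (\<Prod>z\<in>croots p. Mval (Pfac p z)) \<le> 3 * n * log 2 n + 2 * n + 2 * n * \<tau>"
    by (simp add: algebra_simps)
  moreover have "- 2 * n * \<tau> \<le> log 2 (\<Prod>z\<in>croots p. norm (Pfac p z))"
    using prod_norm_Pfac_ge_coeff_bounded[OF bounded p] Pfac_nonzero[OF p] deg
    by (subst le_log_iff) (auto intro: prod_pos)
  ultimately show ?thesis
    using sum_log_Mval_inverse_Pfac[OF p] by simp
qed

lemma soft_O_bound: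
  fixes n t :: real
  assumes n: "2 \<le> n" and t: "1 \<le> t"
  shows "3 * n * log 2 n + 2 * n + 4 * n * t \<le> 6 * n * t * (log 2 n + log 2 t + 2)"
proof -
  define a b d e where "a = n * log 2 n" and "b = n * t * log 2 n"
    and "d = n * t * log 2 t" and "e = n * t"
  have log: "1 \<le> log 2 n" "0 \<le> log 2 t" using n t by auto
  have "n \<le> e" using n t mult_left_mono[of 1 t n] by (simp add: e_def)
  moreover from this have "a \<le> b" using log by (simp add: a_def b_def e_def mult_right_mono)
  moreover have "0 \<le> a" "0 \<le> d" using n t log by (simp_all add: a_def d_def)
  moreover have "3 * n * log 2 n + 2 * n + 4 * n * t = 3 * a + 2 * n + 4 * e"
    "6 * n * t * (log 2 n + log 2 t + 2) = 6 * b + 6 * d + 12 * e"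
    by (simp_all add: a_def b_def d_def e_def algebra_simps)
  ultimately show ?thesis using n by linarith
qed

theorem mainTheorem10:
  shows "(\<forall>(p :: int poly) (n :: nat) (\<tau> :: nat).
            degree p = n \<and> n \<ge> 2 \<and> coeff_bounded p \<tau> \<longrightarrow>
            (\<Prod>z\<in>croots p. norm (Pfac p z))
              \<ge> 2 powr (- 2 * real n * real \<tau> - real n * log 2 (real n)))
       \<and> (\<exists>(C :: real) (c :: nat). \<forall>(p :: int poly) (n :: nat) (\<tau> :: nat).
            degree p = n \<and> n \<ge> 2 \<and> coeff_bounded p \<tau> \<longrightarrow>
            (\<Sum>z\<in>croots p. log 2 (Mval (inverse (Pfac p z))))
              \<le> C * real n * real \<tau> * (log 2 (real n) + log 2 (real \<tau>) + 2) ^ c)"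
proof (intro conjI allI impI exI[where x = "6 :: real"] exI[where x = "1 :: nat"])
  fix p :: "int poly" and n \<tau> :: nat
  assume "degree p = n \<and> n \<ge> 2 \<and> coeff_bounded p \<tau>"
  then have deg: "degree p = n" and n: "2 \<le> n" and bounded: "coeff_bounded p \<tau>" and "p \<noteq> 0"
    by auto
  have "2 powr (- 2 * real n * real \<tau> - real n * log 2 (real n)) \<le> 2 powr (- 2 * real n * real \<tau>)"
    using n by (intro powr_mono) auto
  also have "\<dots> \<le> (\<Prod>z\<in>croots p. norm (Pfac p z))"
    using prod_norm_Pfac_ge_coeff_bounded[OF bounded \<open>p \<noteq> 0\<close>] deg by simp
  finally show "2 powr (- 2 * real n * real \<tau> - real n * log 2 (real n)) \<le>
    (\<Prod>z\<in>croots p. norm (Pfac p z))" .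
next
  fix p :: "int poly" and n \<tau> :: nat
  assume "degree p = n \<and> n \<ge> 2 \<and> coeff_bounded p \<tau>"
  then have deg: "degree p = n" and n: "2 \<le> n" and bounded: "coeff_bounded p \<tau>" and "p \<noteq> 0"
    by auto
  have "(\<Sum>z\<in>croots p. log 2 (Mval (inverse (Pfac p z)))) \<le> 3 * n * log 2 n + 2 * n + 4 * n * \<tau>"
    using sum_log_Mval_inverse_Pfac_le[OF bounded deg] n by simp
  also have "\<dots> \<le> 6 * real n * real \<tau> * (log 2 (real n) + log 2 (real \<tau>) + 2) ^ 1"
    using soft_O_bound coeff_bounded_imp_one_le[OF bounded \<open>p \<noteq> 0\<close>] n by simp
  finally show "(\<Sum>z\<in>croots p. log 2 (Mval (inverse (Pfac p z))))
    \<le> 6 * real n * real \<tau> * (log 2 (real n) + log 2 (real \<tau>) + 2) ^ 1" .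
qed

end
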